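(* Let $\mathcal{X}=\{\{1,4,5\},\{2,4,5\},\{1,6,7\},\{2,6,7\},\{1,2,3\}\}$ on the ground set $[7]$. Then the uniform matroid $U_{2,7}$ is the unique minimal $\mathcal{X}$-matroid with respect to the dependency order, while $\mathrm{val}_{\mathcal{X}}([7])=3$; in particular $\mathrm{val}_{\mathcal{X}}$ is not the rank function of the unique minimal $\mathcal{X}$-matroid.
   Context: An $\mathcal{X}$-matroid is a matroid on $[7]$ in which every member of $\mathcal{X}$ is a circuit. Dependency order: $N_1\le N_2$ iff every dependent set of $N_1$ is dependent in $N_2$. $U_{2,7}$ is the uniform matroid of rank $2$ on $[7]$ (dependent sets are the subsets of size $\ge3$). A proper $\mathcal{X}$-sequence is a sequence $\mathcal{S}=(X_1,\dots,X_k)$ ($k\ge0$) of members of $\mathcal{X}$ with $X_i\not\subseteq\bigcup_{j<i}X_j$ for $i=2,\dots,k$; for $F\subseteq[7]$, $\mathrm{val}(F,\mathcal{S})=|F\cup\bigcup_{i=1}^kX_i|-k$, and $\mathrm{val}_{\mathcal{X}}(F)$ is the minimum of $\mathrm{val}(F,\mathcal{S})$ over all proper $\mathcal{X}$-sequences $\mathcal{S}$. *)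

theory Defs
  imports Main
begin

definition ground7 :: "nat set" where
  "ground7 = {1..7}"

definition is_matroid :: "'a set \<Rightarrow> 'a set set \<Rightarrow> bool" where
  "is_matroid E I \<longleftrightarrow>
     finite E \<and> (\<forall>A\<in>I. A \<subseteq> E) \<and> {} \<in> I \<and>
     (\<forall>A B. B \<in> I \<and> A \<subseteq> B \<longrightarrow> A \<in> I) \<and>
     (\<forall>A B. A \<in> I \<and> B \<in> I \<and> card A < card B \<longrightarrow> (\<exists>x\<in>B - A. insert x A \<in> I))"

definition dependent :: "'a set \<Rightarrow> 'a set set \<Rightarrow> 'a set \<Rightarrow> bool" where
  "dependent E I D \<longleftrightarrow> D \<subseteq> E \<and> D \<notin> I"

definition circuit :: "'a set \<Rightarrow> 'a set set \<Rightarrow> 'a set \<Rightarrow> bool" where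
  "circuit E I C \<longleftrightarrow> dependent E I C \<and> (\<forall>D. D \<subset> C \<longrightarrow> \<not> dependent E I D)"

definition X_matroid :: "nat set set \<Rightarrow> nat set set \<Rightarrow> bool" where
  "X_matroid X I \<longleftrightarrow> is_matroid ground7 I \<and> (\<forall>C\<in>X. circuit ground7 I C)"

definition dep_le :: "nat set set \<Rightarrow> nat set set \<Rightarrow> bool" where
  "dep_le I1 I2 \<longleftrightarrow> (\<forall>D. dependent ground7 I1 D \<longrightarrow> dependent ground7 I2 D)"

definition minimal_X_matroid :: "nat set set \<Rightarrow> nat set set \<Rightarrow> bool" where
  "minimal_X_matroid X I \<longleftrightarrow> X_matroid X I \<and>
     (\<forall>N. X_matroid X N \<and> dep_le N I \<longrightarrow> N = I)"

definition U27 :: "nat set set" where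
  "U27 = {A. A \<subseteq> ground7 \<and> card A \<le> 2}"

definition matroid_rank :: "nat set set \<Rightarrow> nat set \<Rightarrow> nat" where
  "matroid_rank I A = Max {card B | B. B \<in> I \<and> B \<subseteq> A}"

definition proper_seq :: "nat set set \<Rightarrow> nat set list \<Rightarrow> bool" where
  "proper_seq X S \<longleftrightarrow> set S \<subseteq> X \<and>
     (\<forall>i<length S. 0 < i \<longrightarrow> \<not> (S ! i \<subseteq> (\<Union>j<i. S ! j)))"

definition val_seq :: "nat set \<Rightarrow> nat set list \<Rightarrow> int" where
  "val_seq F S = int (card (F \<union> \<Union>(set S))) - int (length S)"

definition val_X :: "nat set set \<Rightarrow> nat set \<Rightarrow> int" where
  "val_X X F = Min {val_seq F S | S. proper_seq X S}"

definition Xex :: "nat set set" where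
  "Xex = {{1,4,5},{2,4,5},{1,6,7},{2,6,7},{1,2,3}}"

end

theory Submission imports Defs begin

text \<open>Every \<open>\<X>\<close>-matroid has rank at most 2: \<open>{1,2}\<close> is independent, and since
  \<open>{4,5}\<close> and \<open>{6,7}\<close> are independent with \<open>1, 2\<close> in their closures, augmentation
  puts \<open>4, 5, 6, 7\<close> into the closure of \<open>{1,2}\<close>, which therefore spans \<open>[7]\<close>.
  So \<open>U\<^sub>2\<^sub>,\<^sub>7\<close>, itself an \<open>\<X>\<close>-matroid, lies below every \<open>\<X>\<close>-matroid.
  On the other hand each of the four sets \<open>{1,4,5}, {2,4,5}, {1,6,7}, {2,6,7}\<close> is
  covered by the other three, so a proper \<open>\<X>\<close>-sequence omits at least one of them
  and has length at most 4; the sequence \<open>{1,4,5}, {2,4,5}, {1,6,7}, {1,2,3}\<close>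
  attains it, whence \<open>val\<^sub>\<X>([7]) = 7 - 4 = 3 \<noteq> 2\<close>.\<close>

lemma circuit_notin_indep: "circuit E I C \<Longrightarrow> C \<notin> I"
  unfolding circuit_def dependent_def by blast

lemma circuit_psubset_indep: "circuit E I C \<Longrightarrow> D \<subset> C \<Longrightarrow> D \<in> I"
  unfolding circuit_def dependent_def by blast

lemma matroid_indep_card_le_spanning:
  assumes M: "is_matroid E I" and B: "B \<in> I"
    and spans: "\<forall>c\<in>S - B. insert c B \<notin> I"
    and T: "T \<in> I" "T \<subseteq> B \<union> S"
  shows "card T \<le> card B"
proof (rule ccontr)
  assume "\<not> card T \<le> card B"
  then obtain x where "x \<in> T - B" "insert x B \<in> I"
    using M B T(1) unfolding is_matroid_def by (meson not_le)
  then show False using spans T(2) by blast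
qed

lemma dep_le_iff_indep_subset:
  assumes "\<forall>A\<in>I2. A \<subseteq> ground7"
  shows "dep_le I1 I2 \<longleftrightarrow> I2 \<subseteq> I1"
  using assms unfolding dep_le_def dependent_def by blast

lemma X_matroid_indep_subset_ground7: "X_matroid X N \<Longrightarrow> A \<in> N \<Longrightarrow> A \<subseteq> ground7"
  unfolding X_matroid_def is_matroid_def by blast

lemma Xex_matroid_card_indep_le_2:
  assumes N: "X_matroid Xex N" and A: "A \<in> N"
  shows "card A \<le> 2"
proof -
  have M: "is_matroid ground7 N" and circuits: "\<And>C. C \<in> Xex \<Longrightarrow> circuit ground7 N C"
    using N unfolding X_matroid_def by auto
  have dep: "C \<notin> N" if "C \<in> Xex" for C
    using circuit_notin_indep[OF circuits[OF that]] .
  have indep: "D \<in> N" if "C \<in> Xex" "D \<subset> C" for C D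
    using circuit_psubset_indep[OF circuits[OF that(1)] that(2)] .
  have pairs_indep: "{4,5} \<in> N" "{6,7} \<in> N" "{1,2} \<in> N"
  proof -
    have "{4::nat,5} \<subset> {1,4,5}" "{6::nat,7} \<subset> {1,6,7}" "{1::nat,2} \<subset> {1,2,3}"
      by (simp_all add: psubset_insert_iff)
    then show "{4,5} \<in> N" "{6,7} \<in> N" "{1,2} \<in> N" using indep by (auto simp: Xex_def)
  qed
  have triple_dep: "T \<notin> N" if "B \<in> {{4,5},{6,7}}" "T \<subseteq> B \<union> {1,2}" "card T = 3" for B T
  proof
    assume "T \<in> N"
    moreover have "B \<in> N" using that(1) pairs_indep by auto
    moreover have "\<forall>c\<in>{1,2} - B. insert c B \<notin> N"
      using that(1) dep by (auto simp: Xex_def)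
    ultimately have "card T \<le> card B"
      using matroid_indep_card_le_spanning[OF M] that(2) by blast
    then show False using that(1,3) by auto
  qed
  have spans: "\<forall>c\<in>ground7 - {1,2}. insert c {1,2} \<notin> N"
  proof
    fix c :: nat assume "c \<in> ground7 - {1,2}"
    then consider "c = 3" | "c \<in> {4,5}" | "c \<in> {6,7}" unfolding ground7_def by force
    then show "insert c {1,2} \<notin> N"
    proof cases
      case 1
      then show ?thesis using dep[of "{1,2,3}"] by (simp add: Xex_def insert_commute)
    next
      case 2
      then show ?thesis using triple_dep[of "{4,5}" "insert c {1,2}"] by auto
    next
      case 3
      then show ?thesis using triple_dep[of "{6,7}" "insert c {1,2}"] by auto
    qed
  qed
  have "card A \<le> card {1::nat,2}"
    using matroid_indep_card_le_spanning[OF M pairs_indep(3) spans A]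
      X_matroid_indep_subset_ground7[OF N A] by blast
  then show ?thesis by simp
qed

lemma Xex_matroid_subset_U27: "X_matroid Xex N \<Longrightarrow> N \<subseteq> U27"
  using Xex_matroid_card_indep_le_2 X_matroid_indep_subset_ground7 unfolding U27_def by blast

lemma U27_is_matroid: "is_matroid ground7 U27"
  unfolding is_matroid_def
proof (intro conjI allI impI ballI)
  show "finite ground7" by (simp add: ground7_def)
  show "{} \<in> U27" by (simp add: U27_def)
  show "A \<subseteq> ground7" if "A \<in> U27" for A using that by (simp add: U27_def)
  show "A \<in> U27" if "B \<in> U27 \<and> A \<subseteq> B" for A B
    using that card_mono[of B A] finite_subset[of B ground7]
    by (auto simp: U27_def ground7_def)
  show "\<exists>x\<in>B - A. insert x A \<in> U27" if "A \<in> U27 \<and> B \<in> U27 \<and> card A < card B" for A B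
  proof -
    have fin: "finite A" "finite B"
      using that finite_subset[of _ ground7] by (auto simp: U27_def ground7_def)
    have "\<not> B \<subseteq> A" using that fin card_mono[of A B] by auto
    then obtain x where x: "x \<in> B" "x \<notin> A" by blast
    then have "insert x A \<in> U27" using that fin by (auto simp: U27_def)
    then show ?thesis using x by blast
  qed
qed

lemma U27_is_Xex_matroid: "X_matroid Xex U27"
  unfolding X_matroid_def
proof (intro conjI ballI U27_is_matroid)
  fix C assume C: "C \<in> Xex"
  have C_sub: "C \<subseteq> ground7" and card_C: "card C = 3"
    using C by (auto simp: Xex_def ground7_def)
  then have "finite C" by (simp add: card_ge_0_finite)
  then have "card D \<le> 2" if "D \<subset> C" for D
    using psubset_card_mono[OF _ that] card_C by simp
  then show "circuit ground7 U27 C"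
    using C_sub card_C unfolding circuit_def dependent_def U27_def by auto
qed

lemma proper_seq_distinct:
  assumes "proper_seq X S" shows "distinct S"
proof -
  have "S ! i \<noteq> S ! j" if "i < j" "j < length S" for i j
    using assms that unfolding proper_seq_def by fastforce
  then show ?thesis by (metis distinct_conv_nth linorder_neq_iff)
qed

lemma proper_seq_not_contains_self_covering:
  assumes S: "proper_seq X S" and Y: "Y \<subseteq> set S" "Y \<noteq> {}" "{} \<notin> Y"
    and covered: "\<forall>C\<in>Y. \<forall>x\<in>C. \<exists>D\<in>Y. x \<in> D \<and> \<not> D \<subseteq> C"
  shows False
proof -
  define idx where "idx = {i. i < length S \<and> S ! i \<in> Y}"
  define k where "k = Max idx"
  have idx_fin: "finite idx" by (simp add: idx_def)
  have "idx \<noteq> {}" using Y(1,2) by (force simp: idx_def in_set_conv_nth)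
  then have k: "k < length S" "S ! k \<in> Y"
    using Max_in[OF idx_fin] unfolding k_def idx_def by auto
  have earlier: "\<exists>j<k. C = S ! j" if "C \<in> Y" "C \<noteq> S ! k" for C
  proof -
    have "C \<in> set S" using that(1) Y(1) by blast
    then obtain j where j: "j < length S" "C = S ! j" by (auto simp: in_set_conv_nth)
    then have "j \<in> idx" using that(1) by (simp add: idx_def)
    then have "j \<le> k" unfolding k_def using idx_fin by simp
    moreover have "j \<noteq> k" using j that(2) by blast
    ultimately have "j < k" by simp
    then show ?thesis using j(2) by blast
  qed
  have cover: "S ! k \<subseteq> (\<Union>j<k. S ! j)"
  proof
    fix x assume "x \<in> S ! k"
    then obtain C where C: "C \<in> Y" "x \<in> C" "\<not> C \<subseteq> S ! k"
      using covered k(2) by meson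
    then obtain j where "j < k" "C = S ! j" using earlier by blast
    then show "x \<in> (\<Union>j<k. S ! j)" using C(2) by blast
  qed
  moreover have "k \<noteq> 0"
  proof
    assume "k = 0"
    then have "S ! k = {}" using cover by simp
    then show False using k(2) Y(3) by simp
  qed
  ultimately show False using S k(1) unfolding proper_seq_def by simp
qed

lemma proper_Xex_seq_length_le_4:
  assumes S: "proper_seq Xex S" shows "length S \<le> 4"
proof -
  let ?Y = "{{1,4,5},{2,4,5},{1,6,7},{2,6,7}} :: nat set set"
  have "\<not> ?Y \<subseteq> set S"
    by (rule notI, rule proper_seq_not_contains_self_covering[OF S, of ?Y]) simp_all
  then obtain C where C: "C \<in> Xex" "C \<notin> set S" by (auto simp: Xex_def)
  have "card Xex \<le> 5"
    using card_length[of "[{1,4,5},{2,4,5},{1,6,7},{2,6,7},{1,2,3}] :: nat set list"]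
    by (simp add: Xex_def)
  then have "card (Xex - {C}) \<le> 4" using C(1) by (simp add: card_Diff_singleton)
  moreover have "set S \<subseteq> Xex - {C}" using S C unfolding proper_seq_def by blast
  then have "card (set S) \<le> card (Xex - {C})" by (intro card_mono) (simp_all add: Xex_def)
  ultimately show ?thesis using distinct_card[OF proper_seq_distinct[OF S]] by simp
qed

lemma val_seq_of_covering_set:
  "\<Union>(set S) \<subseteq> F \<Longrightarrow> val_seq F S = int (card F) - int (length S)"
  unfolding val_seq_def by (simp add: Un_absorb2)

lemma Xex_subset_ground7: "C \<in> Xex \<Longrightarrow> C \<subseteq> ground7"
  by (auto simp: Xex_def ground7_def)

lemma val_seq_proper_Xex:
  assumes "proper_seq Xex S" shows "val_seq ground7 S = 7 - int (length S)"
proof -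
  have "\<Union>(set S) \<subseteq> ground7" using assms Xex_subset_ground7 unfolding proper_seq_def by blast
  then show ?thesis by (simp add: val_seq_of_covering_set ground7_def)
qed

lemma val_Xex_ground7: "val_X Xex ground7 = 3"
proof -
  define vals where "vals = {val_seq ground7 S |S. proper_seq Xex S}"
  have "proper_seq Xex [{1,4,5},{2,4,5},{1,6,7},{1,2,3}]"
    unfolding proper_seq_def by (auto simp: Xex_def less_Suc_eq numeral_eq_Suc lessThan_Suc)
  then have "3 \<in> vals" unfolding vals_def using val_seq_proper_Xex by force
  moreover have vals_sub: "vals \<subseteq> {3..7}"
    unfolding vals_def using val_seq_proper_Xex proper_Xex_seq_length_le_4 by fastforce
  then have "finite vals" by (rule finite_subset) simp
  ultimately have "Min vals = 3" using vals_sub by (intro Min_eqI) auto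
  then show ?thesis unfolding val_X_def vals_def .
qed

lemma rank_U27_ground7: "matroid_rank U27 ground7 = 2"
  unfolding matroid_rank_def
proof (rule Max_eqI)
  let ?cards = "{card B |B. B \<in> U27 \<and> B \<subseteq> ground7}"
  show "finite ?cards" by (rule finite_subset[of _ "{0..2}"]) (auto simp: U27_def)
  show "y \<le> 2" if "y \<in> ?cards" for y using that by (auto simp: U27_def)
  have "{1,2} \<in> U27 \<and> {1,2} \<subseteq> ground7" by (simp add: U27_def ground7_def)
  then show "2 \<in> ?cards" by force
qed

theorem mainTheorem18:
  shows "minimal_X_matroid Xex U27
         \<and> (\<forall>N. minimal_X_matroid Xex N \<longrightarrow> N = U27)
         \<and> val_X Xex ground7 = 3
         \<and> val_X Xex ground7 \<noteq> int (matroid_rank U27 ground7)"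
proof -
  have U27_least: "dep_le U27 N" if "X_matroid Xex N" for N
    using dep_le_iff_indep_subset[of N U27] X_matroid_indep_subset_ground7[OF that]
      Xex_matroid_subset_U27[OF that] by blast
  have "minimal_X_matroid Xex U27"
    unfolding minimal_X_matroid_def
  proof (intro conjI allI impI U27_is_Xex_matroid)
    fix N assume N: "X_matroid Xex N \<and> dep_le N U27"
    then have "U27 \<subseteq> N"
      using dep_le_iff_indep_subset[of U27 N] X_matroid_indep_subset_ground7[OF U27_is_Xex_matroid]
      by blast
    then show "N = U27" using Xex_matroid_subset_U27 N by blast
  qed
  moreover have "N = U27" if "minimal_X_matroid Xex N" for N
    using that U27_least U27_is_Xex_matroid unfolding minimal_X_matroid_def by blast
  ultimately show ?thesis using val_Xex_ground7 rank_U27_ground7 by simp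
qed

end
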